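(* Consider the planted dense subgraph problem with $\rho\le1/2$ and $0<q_0<q_1<1$, and let $\nu=\min\{\rho,q_0,1-q_1\}$. Let $k\ge0$ be an integer, $D=2k+1$, and \[ f(Y)=\tau_k\Big(\frac{1}{(q_1-q_0)\rho}\Big(\frac{1}{n-1}\sum_{i=2}^nY_{1i}-q_0\Big)\Big). \] For any $0<r<1$, if $\frac{(q_1-q_0)^2}{q_0}\ge\frac{216}{r^2\rho^2(n-1)}[\log4+3D\log(9/\nu)]$ and $q_1\rho\ge\frac{864}{r^2(n-1)}[\log4+3D\log(9/\nu)]$, then $\mathbb{E}(f(Y)-x)^2\le D^2r^{D-1}$.
   Context: Planted dense subgraph problem: $v\in\{0,1\}^n$ has i.i.d. $\mathrm{Bernoulli}(\rho)$ entries; conditionally on $v$, for each pair $i<j$ independently, $Y_{ij}\sim\mathrm{Bernoulli}(q_0+(q_1-q_0)v_iv_j)$ (with $Y_{1i}$ meaning the entry for the pair $\{1,i\}$); target $x=v_1$. $\tau_k(y)=(2k+1)\binom{2k}{k}\int_0^yt^k(1-t)^k\,dt$, a polynomial of degree $2k+1$. Logarithms are natural. *)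

theory Defs
  imports "HOL-Probability.Probability"
begin

text \<open>The polynomial tau_k(y) = (2k+1) binom(2k,k) int_0^y t^k (1-t)^k dt
  (oriented integral, so negative y gives the negated integral over [y,0]).\<close>
definition tau :: "nat \<Rightarrow> real \<Rightarrow> real" where
  "tau k y = real (2*k+1) * real ((2*k) choose k) *
     (LBINT t=ereal 0..ereal y. t ^ k * (1 - t) ^ k)"

definition pds_vertices :: "nat \<Rightarrow> real \<Rightarrow> (nat \<Rightarrow> bool) pmf" where
  "pds_vertices n \<rho> = Pi_pmf {1..n} False (\<lambda>_. bernoulli_pmf \<rho>)"

definition pds_edges ::
  "nat \<Rightarrow> real \<Rightarrow> real \<Rightarrow> (nat \<Rightarrow> bool) \<Rightarrow> (nat \<times> nat \<Rightarrow> bool) pmf" where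
  "pds_edges n q0 q1 v = Pi_pmf {(i, j). 1 \<le> i \<and> i < j \<and> j \<le> n} False
     (\<lambda>(i, j). bernoulli_pmf (q0 + (q1 - q0) * (of_bool (v i) * of_bool (v j))))"

definition pds :: "nat \<Rightarrow> real \<Rightarrow> real \<Rightarrow> real \<Rightarrow> ((nat \<Rightarrow> bool) \<times> (nat \<times> nat \<Rightarrow> bool)) pmf" where
  "pds n \<rho> q0 q1 = do { v \<leftarrow> pds_vertices n \<rho>; Y \<leftarrow> pds_edges n q0 q1 v; return_pmf (v, Y) }"

end

theory Submission
  imports Defs
begin

text \<open>Let b = v 1, let S be the degree of vertex 1 and X = (n-1)(q1-q0)\<rho> the gap between the
  conditional means of S given b = 1 and b = 0. The estimator is tau k (b + w/X), where w is S centred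
  at its conditional mean. Since tau k fixes 0 and 1 and its derivative vanishes to order k at both
  points, the squared error is O(d^(2k+2) (1+d)^(2k)) with d = |w|/X, hence at most a constant K times
  exp(\<mu> |w|) with \<mu> of order k/(r X). The two-sided moment generating function of w obeys the
  Chernoff bound exp((n-1) p \<mu>^2) for |\<mu>| \<le> 1, with p = q0 + (q1-q0)\<rho>; the hypotheses give exactly
  \<mu> \<le> 1 and (n-1) p \<mu>^2 \<le> k+1, and 2 K e^(k+1) \<le> (2k+1)^2 r^(2k).\<close>

lemma has_real_derivative_tau:
  "(tau k has_real_derivative real (2*k+1) * real ((2*k) choose k) * (y^k * (1-y)^k)) (at y)"
proof -
  define a where "a = - \<bar>y\<bar> - 1"
  define b where "b = \<bar>y\<bar> + 1"
  have y: "a \<le> y" "y \<le> b" "a \<le> 0" "0 \<le> b" "y \<in> interior {a..b}"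
    by (auto simp: a_def b_def)
  have "((\<lambda>u. LBINT t=ereal 0..ereal u. t^k * (1 - t)^k) has_vector_derivative y^k * (1-y)^k)
      (at y within {a..b})"
    by (intro interval_integral_FTC2 y(1-4) continuous_intros)
  then have "((\<lambda>u. LBINT t=ereal 0..ereal u. t^k * (1 - t)^k) has_real_derivative y^k * (1-y)^k) (at y)"
    by (simp add: at_within_interior[OF y(5)] has_real_derivative_iff_has_vector_derivative)
  then show ?thesis
    unfolding tau_def[abs_def] by (rule DERIV_cmult)
qed

lemma tau_0 [simp]: "tau k 0 = 0"
  by (simp add: tau_def zero_ereal_def)

lemma interval_integral_Beta_kernel:
  "(LBINT t=ereal 0..ereal 1. t^k * (1-t)^k) = Beta (real k + 1) (real k + 1)"
proof -
  have "((\<lambda>t. t powr (real k + 1 - 1) * (1-t) powr (real k + 1 - 1)) has_integral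
      Beta (real k + 1) (real k + 1)) {0<..<1}"
    using has_integral_Beta_real[of "real k + 1" "real k + 1"] by (simp add: has_integral_Icc_iff_Ioo)
  then have "((\<lambda>t. t^k * (1-t)^k) has_integral Beta (real k + 1) (real k + 1)) {0<..<1}"
    by (rule has_integral_cong[THEN iffD1, rotated]) (auto simp: powr_realpow)
  then have "((\<lambda>t::real. t^k * (1-t)^k) has_integral Beta (real k + 1) (real k + 1)) {0..1}"
    by (simp add: has_integral_Icc_iff_Ioo)
  moreover have "set_integrable lborel {0..1::real} (\<lambda>t. t^k * (1-t)^k)"
    by (intro borel_integrable_atLeastAtMost' continuous_intros)
  ultimately show ?thesis
    by (simp add: interval_integral_Icc set_borel_integral_eq_integral(2) integral_unique)
qed

lemma tau_1 [simp]: "tau k 1 = 1"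
proof -
  have "Gamma (real k + 1 + (real k + 1)) = real (2*k+1) * fact (2*k)"
    using Gamma_fact[of "2*k+1", where 'a=real] by (simp add: add_ac)
  then have B: "Beta (real k + 1) (real k + 1) = fact k * fact k / (real (2*k+1) * fact (2*k))"
    using Gamma_fact[of k, where 'a=real] by (simp add: Beta_def add.commute)
  have C: "real ((2*k) choose k) = fact (2*k) / (fact k * fact k)"
    using binomial_fact[of k "2*k", where 'a=real] by (simp add: mult_2)
  show ?thesis
    unfolding tau_def interval_integral_Beta_kernel B C
    by (simp add: field_simps add_pos_pos del: of_nat_Suc)
qed

lemma abs_mult_one_minus_le:
  fixes b z d :: real
  assumes "b = 0 \<or> b = 1" "\<bar>z - b\<bar> \<le> \<bar>d\<bar>"
  shows "\<bar>z * (1 - z)\<bar> \<le> \<bar>d\<bar> * (1 + \<bar>d\<bar>)"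
proof -
  consider "\<bar>z\<bar> \<le> \<bar>d\<bar>" "\<bar>1 - z\<bar> \<le> 1 + \<bar>d\<bar>" | "\<bar>z\<bar> \<le> 1 + \<bar>d\<bar>" "\<bar>1 - z\<bar> \<le> \<bar>d\<bar>"
    using assms by fastforce
  then show ?thesis
  proof cases
    case 1
    then show ?thesis by (simp add: abs_mult mult_mono)
  next
    case 2
    then have "\<bar>z\<bar> * \<bar>1 - z\<bar> \<le> (1 + \<bar>d\<bar>) * \<bar>d\<bar>" by (intro mult_mono) auto
    then show ?thesis by (simp add: abs_mult mult.commute)
  qed
qed

lemma MVT_abs:
  fixes f f' :: "real \<Rightarrow> real"
  assumes "\<And>x. DERIV f x :> f' x"
  obtains z where "\<bar>z - a\<bar> \<le> \<bar>h\<bar>" "f (a + h) - f a = h * f' z"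
proof -
  consider "h = 0" | "0 < h" | "h < 0" by linarith
  then show ?thesis
  proof cases
    case 2
    then obtain z where "a < z" "z < a + h" "f (a + h) - f a = (a + h - a) * f' z"
      using MVT2[of a "a + h" f f'] assms by auto
    then show ?thesis by (intro that[of z]) auto
  next
    case 3
    then obtain z where "a + h < z" "z < a" "f a - f (a + h) = (a - (a + h)) * f' z"
      using MVT2[of "a + h" a f f'] assms by auto
    then show ?thesis by (intro that[of z]) (auto simp: algebra_simps)
  qed (auto intro: that)
qed

lemma abs_tau_sub_le:
  fixes b d :: real
  assumes b: "b = 0 \<or> b = 1"
  shows "\<bar>tau k (b + d) - b\<bar>
    \<le> real (2*k+1) * real ((2*k) choose k) * \<bar>d\<bar> * (\<bar>d\<bar> * (1 + \<bar>d\<bar>))^k"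
proof -
  define c where "c = real (2*k+1) * real ((2*k) choose k)"
  have deriv: "\<And>x. DERIV (tau k) x :> c * (x^k * (1-x)^k)"
    unfolding c_def by (rule has_real_derivative_tau)
  obtain z where z: "\<bar>z - b\<bar> \<le> \<bar>d\<bar>" "tau k (b + d) - tau k b = d * (c * (z^k * (1-z)^k))"
    using MVT_abs[OF deriv] by blast
  have "\<bar>z^k * (1-z)^k\<bar> = \<bar>z * (1-z)\<bar>^k"
    by (simp add: abs_mult power_abs power_mult_distrib)
  also have "\<dots> \<le> (\<bar>d\<bar> * (1 + \<bar>d\<bar>))^k"
    by (intro power_mono abs_mult_one_minus_le[OF b z(1)]) auto
  finally have "\<bar>d\<bar> * (c * \<bar>z^k * (1-z)^k\<bar>) \<le> \<bar>d\<bar> * (c * (\<bar>d\<bar> * (1 + \<bar>d\<bar>))^k)"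
    by (intro mult_left_mono) (auto simp: c_def)
  moreover have "tau k b = b"
    using b by auto
  ultimately show ?thesis
    using z(2) by (simp add: abs_mult c_def mult_ac)
qed

lemma two_mult_le_exp: "2 * y \<le> exp (y::real)"
proof (cases "y \<ge> 0")
  case True
  have "0 \<le> (y - 1)^2" by simp
  then show ?thesis
    using exp_lower_Taylor_quadratic[OF True] by (simp add: power2_diff)
next
  case False
  then show ?thesis using exp_gt_zero[of y] by linarith
qed

lemma power2_le_exp:
  fixes x r :: real
  assumes "x \<ge> 0" "r > 0"
  shows "x^2 \<le> r^2 / 256 * exp (16 * x / r)"
proof -
  have "x = r/16 * (2 * (8*x/r))" using assms by simp
  also have "\<dots> \<le> r/16 * exp (8*x/r)"
    using assms by (intro mult_left_mono two_mult_le_exp) auto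
  finally have "x^2 \<le> (r/16 * exp (8*x/r))^2"
    using assms by (intro power_mono) auto
  also have "\<dots> = r^2 / 256 * exp (16 * x / r)"
    by (simp add: power2_eq_square flip: exp_add)
  finally show ?thesis .
qed

lemma central_binomial_sq_le: "real ((2*k) choose k)^2 \<le> 16^k"
proof -
  have "real ((2*k) choose k) \<le> 2^(2*k)"
    using binomial_le_pow2[of "2*k" k] by (metis of_nat_le_iff of_nat_numeral of_nat_power)
  then have "real ((2*k) choose k)^2 \<le> (4^k)^2"
    by (intro power_mono) (auto simp: power_mult)
  also have "(4^k)^2 = (16::real)^k"
    by (simp add: power2_eq_square flip: power_mult_distrib)
  finally show ?thesis .
qed

lemma power_one_plus_le_exp:
  fixes x :: real
  assumes "0 \<le> x"
  shows "(1 + x)^n \<le> exp (real n * x)"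
proof -
  have "(1 + x)^n \<le> (exp x)^n"
    using assms by (intro power_mono exp_ge_add_one_self) auto
  then show ?thesis by (simp add: exp_of_nat_mult)
qed

lemma power_mult_power_le_exp:
  fixes x r :: real
  assumes x: "0 \<le> x" and r: "0 < r" "r \<le> 1"
  shows "(x^2)^(k+1) * ((1+x)^2)^k \<le> (r^2 / 256)^(k+1) * exp (18 * real (k+1) / r * x)"
proof -
  have "(x^2)^(k+1) \<le> (r^2 / 256 * exp (16 * x / r))^(k+1)"
    using power2_le_exp[OF x r(1)] by (intro power_mono) auto
  also have "\<dots> = (r^2 / 256)^(k+1) * exp (real (k+1) * (16 * x / r))"
    by (simp only: power_mult_distrib exp_of_nat_mult)
  finally have square: "(x^2)^(k+1) \<le> (r^2 / 256)^(k+1) * exp (real (k+1) * (16 * x / r))" .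
  have "((1+x)^2)^k \<le> exp (real (2*k) * x)"
    unfolding power_mult[symmetric] using x by (rule power_one_plus_le_exp)
  also have "real (2*k) * x \<le> 2 * real (k+1) * x"
    using x by (intro mult_right_mono) auto
  also have "\<dots> \<le> 2 * real (k+1) * x / r"
    using r x by (simp add: le_divide_eq mult_left_le)
  finally have linear: "((1+x)^2)^k \<le> exp (2 * real (k+1) * x / r)" by simp
  have "(x^2)^(k+1) * ((1+x)^2)^k
      \<le> (r^2 / 256)^(k+1) * exp (real (k+1) * (16 * x / r)) * exp (2 * real (k+1) * x / r)"
    using square linear by (intro mult_mono) auto
  also have "\<dots> = (r^2 / 256)^(k+1) * exp (18 * real (k+1) / r * x)"
  proof -
    have "real (k+1) * (16 * x / r) + 2 * real (k+1) * x / r = 18 * real (k+1) / r * x"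
      by (simp add: algebra_simps flip: add_divide_distrib)
    then show ?thesis by (simp add: mult.assoc flip: exp_add)
  qed
  finally show ?thesis .
qed

text \<open>The constants 256 and 16^k are chosen so that two_exp_Suc_le absorbs the final factor 2 e^(k+1).\<close>
lemma tau_error_sq_le_exp:
  fixes b d r :: real
  assumes b: "b = 0 \<or> b = 1" and r: "0 < r" "r \<le> 1"
  shows "(tau k (b + d) - b)^2
    \<le> real (2*k+1)^2 * r^(2*k) / (256 * 16^k) * exp (18 * real (k+1) / r * \<bar>d\<bar>)"
proof -
  define x where "x = \<bar>d\<bar>"
  define c where "c = real (2*k+1) * real ((2*k) choose k)"
  have x: "x \<ge> 0" by (simp add: x_def)
  have "\<bar>tau k (b + d) - b\<bar>^2 \<le> (c * x * (x * (1 + x))^k)^2"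
    using abs_tau_sub_le[OF b, of k d] by (intro power_mono) (auto simp: c_def x_def)
  then have "(tau k (b + d) - b)^2 \<le> c^2 * ((x^2)^(k+1) * ((1+x)^2)^k)"
    by (simp add: power_mult_distrib power2_eq_square power_add mult_ac)
  also have "\<dots> \<le> real (2*k+1)^2 * 16^k * ((r^2 / 256)^(k+1) * exp (18 * real (k+1) / r * x))"
  proof (rule mult_mono)
    show "c^2 \<le> real (2*k+1)^2 * 16^k"
      unfolding c_def power_mult_distrib using central_binomial_sq_le by (intro mult_left_mono) auto
  qed (use power_mult_power_le_exp[OF x r] x in auto)
  also have "\<dots> = real (2*k+1)^2 * (16^k * (r^2 / 256)^(k+1)) * exp (18 * real (k+1) / r * x)"
    by (simp only: mult_ac)
  also have "\<dots> \<le> real (2*k+1)^2 * (r^(2*k) / (256 * 16^k)) * exp (18 * real (k+1) / r * x)"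
  proof -
    have "(256::real)^(k+1) = 256 * (16^k * 16^k)"
      by (simp flip: power_mult_distrib)
    moreover have "(r^2)^(k+1) = r^(2*k) * r^2"
      by (simp flip: power_mult power_add)
    ultimately have "16^k * (r^2 / 256)^(k+1) = r^(2*k) * r^2 / (256 * 16^k)"
      by (simp add: power_divide)
    also have "\<dots> \<le> r^(2*k) / (256 * 16^k)"
      using r by (simp add: divide_right_mono mult_left_le power_le_one)
    finally show ?thesis
      by (intro mult_right_mono mult_left_mono) auto
  qed
  finally show ?thesis
    by (simp add: x_def)
qed

lemma expectation_bind_pmf_finite:
  fixes h :: "'b \<Rightarrow> real"
  assumes "finite (set_pmf p)" "\<And>x. x \<in> set_pmf p \<Longrightarrow> finite (set_pmf (f x))"
  shows "measure_pmf.expectation (p \<bind> f) h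
    = measure_pmf.expectation p (\<lambda>x. measure_pmf.expectation (f x) h)"
  using assms by (simp add: pmf_expectation_bind[OF assms(1,2) subset_refl] integral_measure_pmf)

lemma finite_set_Pi_pmf:
  fixes dflt :: "'b::finite"
  assumes "finite A"
  shows "finite (set_pmf (Pi_pmf A dflt p))"
  unfolding set_Pi_pmf[OF assms] using assms by (intro finite_PiE_dflt) auto

lemma finite_edge_set: "finite {(i, j). 1 \<le> i \<and> i < j \<and> j \<le> (n::nat)}"
  by (rule finite_subset[of _ "{1..n} \<times> {1..n}"]) auto

lemma finite_set_pds_vertices: "finite (set_pmf (pds_vertices n \<rho>))"
  unfolding pds_vertices_def by (rule finite_set_Pi_pmf) simp

lemma finite_set_pds_edges: "finite (set_pmf (pds_edges n q0 q1 v))"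
  unfolding pds_edges_def by (rule finite_set_Pi_pmf[OF finite_edge_set])

lemma finite_set_pds: "finite (set_pmf (pds n \<rho> q0 q1))"
  unfolding pds_def using finite_set_pds_vertices finite_set_pds_edges by simp

lemma expectation_pds:
  fixes g :: "(nat \<Rightarrow> bool) \<times> (nat \<times> nat \<Rightarrow> bool) \<Rightarrow> real"
  shows "measure_pmf.expectation (pds n \<rho> q0 q1) g = measure_pmf.expectation (pds_vertices n \<rho>)
    (\<lambda>v. measure_pmf.expectation (pds_edges n q0 q1 v) (\<lambda>Y. g (v, Y)))"
  unfolding pds_def
  by (simp add: expectation_bind_pmf_finite finite_set_pds_vertices finite_set_pds_edges)

lemma prod_edges_at_1:
  "(\<Prod>e\<in>{(i, j). 1 \<le> i \<and> i < j \<and> j \<le> n}. if fst e = (1::nat) then w e else 1)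
    = (\<Prod>j\<in>{2..n}. (w (1, j) :: real))"
proof -
  have "(\<Prod>e\<in>{(i, j). 1 \<le> i \<and> i < j \<and> j \<le> n}. if fst e = (1::nat) then w e else 1)
      = (\<Prod>e\<in>{e \<in> {(i, j). 1 \<le> i \<and> i < j \<and> j \<le> n}. fst e = 1}. w e)"
    by (rule prod.inter_filter[OF finite_edge_set, symmetric])
  also have "{e \<in> {(i, j). 1 \<le> i \<and> i < j \<and> j \<le> n}. fst e = 1} = Pair 1 ` {2..n}"
    by (auto simp: image_iff)
  finally show ?thesis
    by (simp add: prod.reindex inj_on_def)
qed

definition degree_1 :: "nat \<Rightarrow> (nat \<times> nat \<Rightarrow> bool) \<Rightarrow> real" where
  "degree_1 n Y = (\<Sum>j=2..n. of_bool (Y (1, j)))"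

lemma expectation_exp_degree_1:
  assumes q: "0 \<le> q0" "q0 \<le> q1" "q1 \<le> 1"
  shows "measure_pmf.expectation (pds_edges n q0 q1 v) (\<lambda>Y. exp (t * degree_1 n Y))
    = (\<Prod>j\<in>{2..n}. 1 + (q0 + (q1 - q0) * (of_bool (v 1) * of_bool (v j))) * (exp t - 1))"
proof -
  define E where "E = {(i, j). 1 \<le> i \<and> i < j \<and> j \<le> (n::nat)}"
  define g where "g e y = (if fst e = (1::nat) then exp (t * of_bool y) else (1::real))"
    for e :: "nat \<times> nat" and y :: bool
  define \<pi> where "\<pi> e = q0 + (q1 - q0) * (of_bool (v (fst e)) * of_bool (v (snd e)))"
    for e :: "nat \<times> nat"
  have \<pi>: "0 \<le> \<pi> e \<and> \<pi> e \<le> 1" for e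
    using q by (auto simp: \<pi>_def)
  have "exp (t * degree_1 n Y) = (\<Prod>e\<in>E. g e (Y e))" for Y
  proof -
    have "exp (t * degree_1 n Y) = (\<Prod>j\<in>{2..n}. exp (t * of_bool (Y (1, j))))"
      unfolding degree_1_def sum_distrib_left by (rule exp_sum) simp
    then show ?thesis
      unfolding g_def E_def prod_edges_at_1 .
  qed
  then have "measure_pmf.expectation (pds_edges n q0 q1 v) (\<lambda>Y. exp (t * degree_1 n Y))
      = measure_pmf.expectation (Pi_pmf E False (\<lambda>e. bernoulli_pmf (\<pi> e))) (\<lambda>Y. \<Prod>e\<in>E. g e (Y e))"
    by (simp add: pds_edges_def E_def \<pi>_def case_prod_unfold)
  also have "\<dots> = (\<Prod>e\<in>E. measure_pmf.expectation (bernoulli_pmf (\<pi> e)) (g e))"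
    unfolding E_def
    by (rule expectation_prod_Pi_pmf[OF finite_edge_set]) (auto simp: g_def integrable_measure_pmf_finite)
  also have "\<dots> = (\<Prod>e\<in>E. if fst e = 1 then 1 + \<pi> e * (exp t - 1) else 1)"
    using \<pi> by (intro prod.cong) (auto simp: g_def algebra_simps)
  also have "\<dots> = (\<Prod>j\<in>{2..n}. 1 + \<pi> (1, j) * (exp t - 1))"
    unfolding E_def by (rule prod_edges_at_1)
  finally show ?thesis by (simp add: \<pi>_def)
qed

lemma expectation_pds_vertices_prod:
  assumes "0 \<le> \<rho>" "\<rho> \<le> 1" "n \<ge> 1" "\<And>b. g b \<ge> 0" "\<And>b. h b \<ge> 0"
  shows "measure_pmf.expectation (pds_vertices n \<rho>) (\<lambda>v. g (v 1) * (\<Prod>j\<in>{2..n}. h (v j)))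
    = (\<rho> * g True + (1-\<rho>) * g False) * (\<rho> * h True + (1-\<rho>) * h False)^(n-1)"
proof -
  define f where "f i = (if i = (1::nat) then g else h)" for i
  have split: "{1..n} = insert 1 {2..n}" using assms(3) by auto
  have "g (v 1) * (\<Prod>j\<in>{2..n}. h (v j)) = (\<Prod>i\<in>{1..n}. f i (v i))" for v :: "nat \<Rightarrow> bool"
    unfolding split by (simp add: f_def)
  then have "measure_pmf.expectation (pds_vertices n \<rho>) (\<lambda>v. g (v 1) * (\<Prod>j\<in>{2..n}. h (v j)))
      = (\<Prod>i\<in>{1..n}. measure_pmf.expectation (bernoulli_pmf \<rho>) (f i))"
    unfolding pds_vertices_def
    by (simp, intro expectation_prod_Pi_pmf) (auto simp: integrable_measure_pmf_finite f_def assms)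
  also have "\<dots> = (\<rho> * g True + (1-\<rho>) * g False) * (\<rho> * h True + (1-\<rho>) * h False)^(n-1)"
    unfolding split using assms by (simp add: f_def algebra_simps)
  finally show ?thesis .
qed

lemma bernoulli_mgf_nonneg:
  fixes p t :: real
  assumes "0 \<le> p" "p \<le> 1"
  shows "0 \<le> 1 + p * (exp t - 1)"
proof -
  have "0 \<le> (1 - p) + p * exp t" using assms by simp
  then show ?thesis by (simp add: algebra_simps)
qed

lemma expectation_exp_centered_degree_1_given:
  assumes n: "n \<ge> 2" and q: "0 \<le> q0" "q0 \<le> q1" "q1 \<le> 1"
  shows "measure_pmf.expectation (pds_edges n q0 q1 v)
      (\<lambda>Y. exp (t * (degree_1 n Y - real (n-1) * (q0 + of_bool (v 1) * (q1 - q0) * \<rho>))))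
    = (if v 1
       then exp (- t * real (n-1) * (q0 + (q1 - q0) * \<rho>)) *
         (\<Prod>j\<in>{2..n}. 1 + (q0 + (q1 - q0) * of_bool (v j)) * (exp t - 1))
       else exp (- t * real (n-1) * q0) * (1 + q0 * (exp t - 1))^(n-1))"
proof -
  define c where "c = exp (- t * real (n-1) * (q0 + of_bool (v 1) * (q1 - q0) * \<rho>))"
  have "measure_pmf.expectation (pds_edges n q0 q1 v)
      (\<lambda>Y. exp (t * (degree_1 n Y - real (n-1) * (q0 + of_bool (v 1) * (q1 - q0) * \<rho>))))
    = measure_pmf.expectation (pds_edges n q0 q1 v) (\<lambda>Y. c * exp (t * degree_1 n Y))"
    by (simp add: c_def algebra_simps flip: exp_add)
  also have "\<dots> = c * measure_pmf.expectation (pds_edges n q0 q1 v) (\<lambda>Y. exp (t * degree_1 n Y))"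
    by (rule integral_mult_right_zero)
  finally show ?thesis
    using n by (cases "v 1") (simp_all add: expectation_exp_degree_1[OF q] c_def mult_ac)
qed

lemma expectation_exp_centered_degree_1:
  assumes n: "n \<ge> 2" and \<rho>: "0 \<le> \<rho>" "\<rho> \<le> 1" and q: "0 \<le> q0" "q0 \<le> q1" "q1 \<le> 1"
  defines "p \<equiv> q0 + (q1 - q0) * \<rho>"
  shows "measure_pmf.expectation (pds n \<rho> q0 q1)
      (\<lambda>(v, Y). exp (t * (degree_1 n Y - real (n-1) * (q0 + of_bool (v 1) * (q1 - q0) * \<rho>))))
    = \<rho> * (exp (- t * real (n-1) * p) * (1 + p * (exp t - 1))^(n-1))
      + (1 - \<rho>) * (exp (- t * real (n-1) * q0) * (1 + q0 * (exp t - 1))^(n-1))"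
proof -
  define h where "h b = 1 + (q0 + (q1 - q0) * of_bool b) * (exp t - 1)" for b
  define g1 where "g1 b = of_bool b * exp (- t * real (n-1) * p)" for b
  define g0 where "g0 b = of_bool (\<not> b) * (exp (- t * real (n-1) * q0) * (1 + q0 * (exp t - 1))^(n-1))"
    for b
  have h: "0 \<le> h b" for b
    unfolding h_def using q by (intro bernoulli_mgf_nonneg) (cases b; simp)+
  have g0: "0 \<le> g0 b" for b
    unfolding g0_def using q bernoulli_mgf_nonneg[of q0 t] by simp
  have "measure_pmf.expectation (pds n \<rho> q0 q1)
      (\<lambda>(v, Y). exp (t * (degree_1 n Y - real (n-1) * (q0 + of_bool (v 1) * (q1 - q0) * \<rho>))))
    = measure_pmf.expectation (pds_vertices n \<rho>)
        (\<lambda>v. g1 (v 1) * (\<Prod>j\<in>{2..n}. h (v j)) + g0 (v 1) * (\<Prod>j\<in>{2..n}. 1))"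
    unfolding expectation_pds prod.case expectation_exp_centered_degree_1_given[OF n q]
    by (intro Bochner_Integration.integral_cong) (auto simp: g1_def g0_def h_def p_def)
  also have "\<dots> = measure_pmf.expectation (pds_vertices n \<rho>) (\<lambda>v. g1 (v 1) * (\<Prod>j\<in>{2..n}. h (v j)))
      + measure_pmf.expectation (pds_vertices n \<rho>) (\<lambda>v. g0 (v 1) * (\<Prod>j\<in>{2..n}. 1))"
    by (intro Bochner_Integration.integral_add integrable_measure_pmf_finite finite_set_pds_vertices)
  also have "\<dots> = (\<rho> * g1 True + (1-\<rho>) * g1 False) * (\<rho> * h True + (1-\<rho>) * h False)^(n-1)
      + (\<rho> * g0 True + (1-\<rho>) * g0 False) * (\<rho> * 1 + (1-\<rho>) * 1)^(n-1)"
  proof -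
    have "measure_pmf.expectation (pds_vertices n \<rho>) (\<lambda>v. g1 (v 1) * (\<Prod>j\<in>{2..n}. h (v j)))
        = (\<rho> * g1 True + (1-\<rho>) * g1 False) * (\<rho> * h True + (1-\<rho>) * h False)^(n-1)"
      by (rule expectation_pds_vertices_prod) (use n \<rho> h in \<open>auto simp: g1_def\<close>)
    moreover have "measure_pmf.expectation (pds_vertices n \<rho>) (\<lambda>v. g0 (v 1) * (\<Prod>j\<in>{2..n}. 1))
        = (\<rho> * g0 True + (1-\<rho>) * g0 False) * (\<rho> * 1 + (1-\<rho>) * 1)^(n-1)"
      by (rule expectation_pds_vertices_prod) (use n \<rho> g0 in auto)
    ultimately show ?thesis by (simp only:)
  qed
  also have "\<rho> * h True + (1-\<rho>) * h False = 1 + p * (exp t - 1)"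
    by (simp add: h_def p_def algebra_simps)
  finally show ?thesis
    by (simp add: g1_def g0_def)
qed

lemma exp_le_one_plus_quadratic:
  fixes t :: real
  assumes "\<bar>t\<bar> \<le> 1"
  shows "exp t \<le> 1 + t + t^2"
proof (cases "t \<ge> 0")
  case True
  then show ?thesis using exp_bound[of t] assms by simp
next
  case False
  define s where "s = -t"
  have s: "0 < s" "s \<le> 1" using False assms by (auto simp: s_def)
  have "exp t * (1 + s) \<le> 1"
    using exp_ge_add_one_self[of s] s by (simp add: s_def exp_minus field_simps)
  moreover have "(1 - s + s^2) * (1 + s) = 1 + s^3"
    by (simp add: algebra_simps power2_eq_square power3_eq_cube)
  moreover have "0 \<le> s^3" using s by simp
  ultimately have "exp t * (1 + s) \<le> (1 - s + s^2) * (1 + s)"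
    by linarith
  then have "exp t \<le> 1 - s + s^2"
    using s by (simp add: mult_le_cancel_right)
  then show ?thesis
    by (simp add: s_def)
qed

lemma chernoff_factor_le:
  fixes p t :: real and m :: nat
  assumes p: "0 \<le> p" "p \<le> 1" and t: "\<bar>t\<bar> \<le> 1"
  shows "exp (- t * real m * p) * (1 + p * (exp t - 1))^m \<le> exp (real m * p * t^2)"
proof -
  have "(1 + p * (exp t - 1))^m \<le> (exp (p * (exp t - 1)))^m"
    using bernoulli_mgf_nonneg[OF p] by (intro power_mono exp_ge_add_one_self) auto
  also have "\<dots> = exp (real m * (p * (exp t - 1)))"
    by (rule exp_of_nat_mult[symmetric])
  finally have "exp (- t * real m * p) * (1 + p * (exp t - 1))^m
      \<le> exp (- t * real m * p) * exp (real m * (p * (exp t - 1)))"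
    by (intro mult_left_mono) auto
  also have "\<dots> = exp (- t * real m * p + real m * (p * (exp t - 1)))"
    by (simp only: exp_add)
  also have "- t * real m * p + real m * (p * (exp t - 1)) \<le> real m * p * t^2"
  proof -
    have "real m * p * (exp t - 1) \<le> real m * p * (t + t^2)"
      using exp_le_one_plus_quadratic[OF t] p by (intro mult_left_mono) auto
    then show ?thesis by (simp add: algebra_simps)
  qed
  finally show ?thesis by simp
qed

lemma centered_degree_1_mgf_le:
  assumes n: "n \<ge> 2" and \<rho>: "0 \<le> \<rho>" "\<rho> \<le> 1" and q: "0 \<le> q0" "q0 \<le> q1" "q1 \<le> 1"
    and t: "\<bar>t\<bar> \<le> 1"
  shows "measure_pmf.expectation (pds n \<rho> q0 q1)
      (\<lambda>(v, Y). exp (t * (degree_1 n Y - real (n-1) * (q0 + of_bool (v 1) * (q1 - q0) * \<rho>))))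
    \<le> exp (real (n-1) * (q0 + (q1 - q0) * \<rho>) * t^2)"
proof -
  define p where "p = q0 + (q1 - q0) * \<rho>"
  have p: "q0 \<le> p" "p \<le> 1"
    using q \<rho> mult_left_le[of \<rho> "q1 - q0"] by (auto simp: p_def)
  have "\<rho> * (exp (- t * real (n-1) * p) * (1 + p * (exp t - 1))^(n-1))
      + (1 - \<rho>) * (exp (- t * real (n-1) * q0) * (1 + q0 * (exp t - 1))^(n-1))
    \<le> \<rho> * exp (real (n-1) * p * t^2) + (1 - \<rho>) * exp (real (n-1) * q0 * t^2)"
    using \<rho> q p by (intro add_mono mult_left_mono chernoff_factor_le t) auto
  also have "\<dots> \<le> \<rho> * exp (real (n-1) * p * t^2) + (1 - \<rho>) * exp (real (n-1) * p * t^2)"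
  proof -
    have "real (n-1) * q0 * t^2 \<le> real (n-1) * p * t^2"
      using p by (intro mult_right_mono mult_left_mono) auto
    then show ?thesis using \<rho> by (intro add_mono mult_left_mono) auto
  qed
  finally show ?thesis
    unfolding expectation_exp_centered_degree_1[OF n \<rho> q] p_def by (simp add: algebra_simps)
qed

lemma exp_abs_le_exp_add_exp_minus: "exp \<bar>x\<bar> \<le> exp x + exp (- x :: real)"
  by (cases "x \<ge> 0") (simp_all add: add_increasing add_increasing2)

lemma estimator_error_sq_le_exp:
  fixes N S q0 q1 \<rho> r :: real and b :: bool
  assumes N: "N > 0" and q: "q0 < q1" and \<rho>: "\<rho> > 0" and r: "0 < r" "r \<le> 1"
  defines "X \<equiv> N * (q1 - q0) * \<rho>"
    and "w \<equiv> S - N * (q0 + of_bool b * (q1 - q0) * \<rho>)"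
  shows "(tau k (1 / ((q1 - q0) * \<rho>) * (1 / N * S - q0)) - of_bool b)^2
    \<le> real (2*k+1)^2 * r^(2*k) / (256 * 16^k)
      * (exp (18 * real (k+1) / (r * X) * w) + exp (- (18 * real (k+1) / (r * X) * w)))"
proof -
  define a where "a = 18 * real (k+1) / (r * X)"
  have X: "X > 0" using N q \<rho> by (simp add: X_def)
  have "1 / ((q1 - q0) * \<rho>) * (1 / N * S - q0) = of_bool b + w / X"
    using N q \<rho> by (simp add: X_def w_def field_simps)
  then have "(tau k (1 / ((q1 - q0) * \<rho>) * (1 / N * S - q0)) - of_bool b)^2
      \<le> real (2*k+1)^2 * r^(2*k) / (256 * 16^k) * exp (18 * real (k+1) / r * \<bar>w / X\<bar>)"
    using tau_error_sq_le_exp[of "of_bool b" r k "w / X"] r by simp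
  also have "18 * real (k+1) / r * \<bar>w / X\<bar> = \<bar>a * w\<bar>"
    using X r by (simp add: a_def abs_mult abs_divide)
  also have "real (2*k+1)^2 * r^(2*k) / (256 * 16^k) * exp \<bar>a * w\<bar>
      \<le> real (2*k+1)^2 * r^(2*k) / (256 * 16^k) * (exp (a * w) + exp (- (a * w)))"
    using r by (intro mult_left_mono exp_abs_le_exp_add_exp_minus) auto
  finally show ?thesis
    by (simp add: a_def)
qed

lemma expectation_estimator_error_le:
  assumes n: "n \<ge> 2" and \<rho>: "0 < \<rho>" "\<rho> \<le> 1" and q: "0 \<le> q0" "q0 < q1" "q1 \<le> 1"
    and r: "0 < r" "r \<le> 1"
    and scale: "18 * real (k+1) / r \<le> real (n-1) * (q1 - q0) * \<rho>"
  defines "\<mu> \<equiv> 18 * real (k+1) / (r * (real (n-1) * (q1 - q0) * \<rho>))"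
  shows "measure_pmf.expectation (pds n \<rho> q0 q1)
      (\<lambda>(v, Y). (tau k (1 / ((q1 - q0) * \<rho>) *
        (1 / real (n - 1) * (\<Sum>i=2..n. of_bool (Y (1, i))) - q0)) - of_bool (v 1))^2)
    \<le> 2 * (real (2*k+1)^2 * r^(2*k) / (256 * 16^k))
      * exp (real (n-1) * (q0 + (q1 - q0) * \<rho>) * \<mu>^2)"
proof -
  define N where "N = real (n-1)"
  define K where "K = real (2*k+1)^2 * r^(2*k) / (256 * 16^k)"
  define w where "w v Y = degree_1 n Y - N * (q0 + of_bool (v 1) * (q1 - q0) * \<rho>)"
    for v :: "nat \<Rightarrow> bool" and Y
  have N: "N > 0" using n by (simp add: N_def)
  have K: "K \<ge> 0" using r by (simp add: K_def)
  have "\<mu> = 18 * real (k+1) / r / (N * (q1 - q0) * \<rho>)"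
    by (simp add: \<mu>_def N_def)
  moreover have "18 * real (k+1) / r \<le> N * (q1 - q0) * \<rho>" "N * (q1 - q0) * \<rho> > 0"
    using scale N q \<rho> by (simp_all add: N_def)
  ultimately have \<mu>: "0 \<le> \<mu>" "\<mu> \<le> 1"
    using r by (simp_all add: divide_le_eq mult.commute)
  have pointwise: "(tau k (1 / ((q1 - q0) * \<rho>) *
        (1 / real (n - 1) * (\<Sum>i=2..n. of_bool (Y (1, i))) - q0)) - of_bool (v 1))^2
      \<le> K * (exp (\<mu> * w v Y) + exp (- \<mu> * w v Y))" for v Y
    using estimator_error_sq_le_exp[OF N q(2) \<rho>(1) r, where S = "degree_1 n Y" and b = "v 1" and k = k]
    by (simp add: K_def \<mu>_def w_def N_def degree_1_def)
  have mgf: "measure_pmf.expectation (pds n \<rho> q0 q1) (\<lambda>(v, Y). exp (t * w v Y))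
      \<le> exp (N * (q0 + (q1 - q0) * \<rho>) * \<mu>^2)" if "t = \<mu> \<or> t = - \<mu>" for t
    using centered_degree_1_mgf_le[OF n _ \<rho>(2) q(1) _ q(3), of t] that \<mu> \<rho> q
    by (auto simp: w_def N_def)
  have int: "integrable (measure_pmf (pds n \<rho> q0 q1)) f" for f :: "_ \<Rightarrow> real"
    by (rule integrable_measure_pmf_finite[OF finite_set_pds])
  have "measure_pmf.expectation (pds n \<rho> q0 q1)
      (\<lambda>(v, Y). (tau k (1 / ((q1 - q0) * \<rho>) *
        (1 / real (n - 1) * (\<Sum>i=2..n. of_bool (Y (1, i))) - q0)) - of_bool (v 1))^2)
    \<le> measure_pmf.expectation (pds n \<rho> q0 q1)
      (\<lambda>(v, Y). K * (exp (\<mu> * w v Y) + exp (- \<mu> * w v Y)))"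
    using pointwise by (intro integral_mono int) auto
  also have "\<dots> = K * (measure_pmf.expectation (pds n \<rho> q0 q1) (\<lambda>(v, Y). exp (\<mu> * w v Y))
      + measure_pmf.expectation (pds n \<rho> q0 q1) (\<lambda>(v, Y). exp (- \<mu> * w v Y)))"
    by (simp add: case_prod_unfold Bochner_Integration.integral_add[OF int int])
  also have "\<dots> \<le> K * (2 * exp (N * (q0 + (q1 - q0) * \<rho>) * \<mu>^2))"
    using mgf[of \<mu>] mgf[of "- \<mu>"] K by (intro mult_left_mono) auto
  finally show ?thesis by (simp add: K_def N_def)
qed

lemma estimator_gap_lower_bound:
  fixes N q0 q1 \<rho> r L :: real
  assumes N: "N > 0" and q: "0 \<le> q0" "q0 < q1" and \<rho>: "0 < \<rho>" "\<rho> \<le> 1" and L: "0 \<le> L"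
    and h1: "216 * L * q0 \<le> (q1 - q0)^2 * r^2 * \<rho>^2 * N"
    and h2: "864 * L \<le> q1 * \<rho> * r^2 * N"
  shows "216 * L \<le> r^2 * (N * (q1 - q0) * \<rho>)"
proof (cases "q1 - q0 \<ge> q0")
  case True
  have "q1 * (\<rho> * r^2 * N) \<le> 2 * (q1 - q0) * (\<rho> * r^2 * N)"
    using True N \<rho> by (intro mult_right_mono) auto
  then have "q1 * \<rho> * r^2 * N \<le> 2 * (r^2 * (N * (q1 - q0) * \<rho>))"
    by (simp add: algebra_simps)
  moreover have "0 \<le> r^2 * (N * (q1 - q0) * \<rho>)" using N q \<rho> by simp
  ultimately show ?thesis using h2 by linarith
next
  case False
  have "216 * L * (q1 - q0) \<le> 216 * L * q0"
    using False L by (intro mult_left_mono) auto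
  also have "\<dots> \<le> (q1 - q0) * (r^2 * (N * (q1 - q0) * \<rho>) * \<rho>)"
    using h1 by (simp add: power2_eq_square mult_ac)
  finally have "216 * L \<le> r^2 * (N * (q1 - q0) * \<rho>) * \<rho>"
    using q by (simp add: mult.commute)
  also have "\<dots> \<le> r^2 * (N * (q1 - q0) * \<rho>)"
    using N q \<rho> by (simp add: mult_left_le)
  finally show ?thesis .
qed

lemma estimator_scale_bounds:
  fixes N q0 q1 \<rho> r L :: real
  assumes N: "N > 0" and q: "0 \<le> q0" "q0 < q1" and \<rho>: "0 < \<rho>" "\<rho> \<le> 1"
    and r: "0 < r" "r \<le> 1" and L: "3 * real (k+1) \<le> L"
    and h1: "216 * L * q0 \<le> (q1 - q0)^2 * r^2 * \<rho>^2 * N"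
    and h2: "864 * L \<le> q1 * \<rho> * r^2 * N"
  shows "18 * real (k+1) / r \<le> N * (q1 - q0) * \<rho>"
    and "N * (q0 + (q1 - q0) * \<rho>) * (18 * real (k+1) / (r * (N * (q1 - q0) * \<rho>)))^2 \<le> real (k+1)"
proof -
  define X where "X = N * (q1 - q0) * \<rho>"
  define c where "c = 18 * real (k+1)"
  have X: "X > 0" using N q \<rho> by (simp add: X_def)
  have L0: "L > 0" using L by simp
  have gap: "216 * L \<le> r^2 * X"
    unfolding X_def using estimator_gap_lower_bound[OF N q \<rho>] L0 h1 h2 by simp
  have "c * r \<le> c"
    using r by (intro mult_left_le) (auto simp: c_def)
  then have "c * r \<le> 216 * L"
    using L unfolding c_def by linarith
  then have "r * c \<le> r * (r * X)"
    using gap by (simp add: power2_eq_square mult_ac)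
  then have "c \<le> r * X"
    using r by simp
  then show "18 * real (k+1) / r \<le> N * (q1 - q0) * \<rho>"
    using r by (simp add: c_def X_def pos_divide_le_eq power2_eq_square mult_ac)
  have degree_term: "216 * L * (N * q0) \<le> r^2 * X^2"
    using mult_right_mono[OF h1, of N] N by (simp add: X_def power2_eq_square mult_ac)
  have gap_term: "216 * L * X \<le> r^2 * X^2"
    using mult_right_mono[OF gap, of X] X by (simp add: power2_eq_square mult_ac)
  have "(216 * L * (N * q0) + 216 * L * X) / 2 \<le> (r^2 * X^2 + r^2 * X^2) / 2"
    using degree_term gap_term by (intro divide_right_mono add_mono) auto
  then have "(N * q0 + X) * (108 * L) \<le> r^2 * X^2"
    by (simp add: algebra_simps)
  then have "c^2 * ((N * q0 + X) * (108 * L)) \<le> c^2 * (r^2 * X^2)"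
    by (rule mult_left_mono) simp
  then have "c^2 * (N * q0 + X) / (r^2 * X^2) \<le> c^2 / (108 * L)"
    using L0 X r by (simp add: field_simps)
  also have "\<dots> = 3 * real (k+1) * real (k+1) / L"
    using L0 by (simp add: c_def power2_eq_square field_simps)
  also have "\<dots> \<le> real (k+1)"
    using L L0 by (simp add: divide_le_eq mult_right_mono)
  finally show "N * (q0 + (q1 - q0) * \<rho>) * (18 * real (k+1) / (r * (N * (q1 - q0) * \<rho>)))^2
      \<le> real (k+1)"
    using X r by (simp add: c_def X_def field_simps power2_eq_square)
qed

lemma log_term_ge:
  fixes \<nu> :: real
  assumes "0 < \<nu>" "\<nu> \<le> 1/2"
  shows "3 * real (k+1) \<le> ln 4 + 3 * real (2*k+1) * ln (9 / \<nu>)"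
proof -
  have "\<nu> * exp 1 \<le> 1/2 * 3"
    using exp_le assms by (intro mult_mono) auto
  then have "exp 1 \<le> 9 / \<nu>"
    using assms by (simp add: field_simps)
  then have "1 \<le> ln (9 / \<nu>)"
    using assms by (simp add: ln_ge_iff)
  then have "3 * real (k+1) \<le> 3 * real (2*k+1) * ln (9 / \<nu>)"
    using mult_mono[of "3 * real (k+1)" "3 * real (2*k+1)" 1] by simp
  then show ?thesis
    using ln_ge_zero[of "4::real"] by linarith
qed

lemma two_exp_Suc_le: "2 * exp (real (k+1)) \<le> 256 * 16^k"
proof -
  have "exp (real (k+1)) = exp 1 ^ (k+1)"
    using exp_of_nat_mult[of "k+1" 1] by simp
  also have "\<dots> \<le> 3 ^ (k+1)"
    by (intro power_mono exp_le) auto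
  also have "\<dots> \<le> 3 * 16^k"
    by (simp add: power_mono)
  finally show ?thesis
    using zero_le_power[of "16::real" k] by linarith
qed

theorem mainTheorem13:
  fixes n k :: nat and \<rho> q0 q1 r :: real
  assumes n: "n \<ge> 2"
    and rho: "0 < \<rho>" "\<rho> \<le> 1/2"
    and q: "0 < q0" "q0 < q1" "q1 < 1"
    and r: "0 < r" "r < 1"
    and h1: "(q1 - q0)^2 / q0 \<ge> 216 / (r^2 * \<rho>^2 * real (n - 1)) *
               (ln 4 + 3 * real (2*k+1) * ln (9 / min \<rho> (min q0 (1 - q1))))"
    and h2: "q1 * \<rho> \<ge> 864 / (r^2 * real (n - 1)) *
               (ln 4 + 3 * real (2*k+1) * ln (9 / min \<rho> (min q0 (1 - q1))))"
  shows "measure_pmf.expectation (pds n \<rho> q0 q1)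
           (\<lambda>(v, Y). (tau k (1 / ((q1 - q0) * \<rho>) *
                 (1 / real (n - 1) * (\<Sum>i=2..n. of_bool (Y (1, i))) - q0))
               - of_bool (v 1))^2)
         \<le> real (2*k+1)^2 * r ^ (2*k)"
proof -
  define N where "N = real (n - 1)"
  define L where "L = ln 4 + 3 * real (2*k+1) * ln (9 / min \<rho> (min q0 (1 - q1)))"
  have N: "N > 0" using n by (simp add: N_def)
  have L: "3 * real (k+1) \<le> L"
    unfolding L_def using rho q by (intro log_term_ge) (auto simp: min_def)
  have "216 / (r^2 * \<rho>^2 * N) * L \<le> (q1 - q0)^2 / q0" "864 / (r^2 * N) * L \<le> q1 * \<rho>"
    using h1 h2 unfolding L_def N_def by simp_all
  then have "216 * L * q0 \<le> (q1 - q0)^2 * r^2 * \<rho>^2 * N" "864 * L \<le> q1 * \<rho> * r^2 * N"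
    using q r rho N by (simp_all add: field_simps)
  then have scale: "18 * real (k+1) / r \<le> N * (q1 - q0) * \<rho>"
    and exponent: "N * (q0 + (q1 - q0) * \<rho>) * (18 * real (k+1) / (r * (N * (q1 - q0) * \<rho>)))^2
      \<le> real (k+1)"
    using estimator_scale_bounds[OF N _ q(2) rho(1) _ r(1) _ L] q rho r by auto
  define K where "K = real (2*k+1)^2 * r^(2*k) / (256 * 16^k)"
  have "measure_pmf.expectation (pds n \<rho> q0 q1)
           (\<lambda>(v, Y). (tau k (1 / ((q1 - q0) * \<rho>) *
                 (1 / real (n - 1) * (\<Sum>i=2..n. of_bool (Y (1, i))) - q0))
               - of_bool (v 1))^2)
      \<le> 2 * K * exp (N * (q0 + (q1 - q0) * \<rho>) * (18 * real (k+1) / (r * (N * (q1 - q0) * \<rho>)))^2)"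
    unfolding K_def N_def
    by (rule expectation_estimator_error_le) (use n rho q r scale in \<open>auto simp: N_def\<close>)
  also have "\<dots> \<le> 2 * K * exp (real (k+1))"
    using exponent r by (intro mult_left_mono) (auto simp: K_def)
  also have "\<dots> \<le> real (2*k+1)^2 * r ^ (2*k)"
    using two_exp_Suc_le[of k] r by (simp add: K_def field_simps)
  finally show ?thesis .
qed

end
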